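(* Let $r\ge1$, let $x$ be a positive integer and let $\{(X_t,Y_t)\}_{t\ge 0}$ be the CA competition process with fitness ratio $r$ started at $(x,x)$. Let $\tau_2=\inf\{t\ge 1: X_t=Y_t\}$ be the time of the second tie (the first tie being at time $0$). Then \[ \mathbb{P}[\tau_2<\infty]\le\frac{2}{r+1}. \]
   Context: The CA competition process with fitness ratio $r\ge 1$ started at $(x_0,y_0)$ is the discrete-time Markov chain $\{(X_t,Y_t)\}_{t\ge0}$ on $\{(x,y)\in\mathbb{Z}^2: x\ge1,y\ge1\}$ with $(X_0,Y_0)=(x_0,y_0)$ and transition probabilities: from $(x,y)$ it moves to $(x+1,y)$ with probability $\frac{rx}{rx+y}$ and to $(x,y+1)$ with probability $\frac{y}{rx+y}$. $\inf\emptyset=\infty$. *)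

theory Defs
  imports Complex_Main
begin

text \<open>CA competition process with fitness ratio r: from (x,y) step to (x+1,y) with
probability r x/(r x + y), to (x,y+1) with probability y/(r x + y).\<close>

definition ca_px :: "real \<Rightarrow> nat \<Rightarrow> nat \<Rightarrow> real" where
  "ca_px r x y = r * real x / (r * real x + real y)"

definition ca_py :: "real \<Rightarrow> nat \<Rightarrow> nat \<Rightarrow> real" where
  "ca_py r x y = real y / (r * real x + real y)"

text \<open>ca_hit r n x y = probability that the chain started at (x,y) visits the diagonal
{X = Y} at some time t with 0 \<le> t \<le> n (first-step decomposition / Markov property).\<close>

fun ca_hit :: "real \<Rightarrow> nat \<Rightarrow> nat \<Rightarrow> nat \<Rightarrow> real" where
  "ca_hit r 0 x y = (if x = y then 1 else 0)"
| "ca_hit r (Suc n) x y =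
     (if x = y then 1
      else ca_px r x y * ca_hit r n (Suc x) y + ca_py r x y * ca_hit r n x (Suc y))"

text \<open>P[tau_2 \<le> n+1] for the chain started at (x,x), where tau_2 = inf{t \<ge> 1. X_t = Y_t}.\<close>

definition ca_tau2_le :: "real \<Rightarrow> nat \<Rightarrow> nat \<Rightarrow> real" where
  "ca_tau2_le r x n =
     ca_px r x x * ca_hit r n (Suc x) x + ca_py r x x * ca_hit r n x (Suc x)"

text \<open>P[tau_2 < \<infinity>] = sup over n of P[tau_2 \<le> n+1] (continuity from below).\<close>

definition ca_tau2_finite :: "real \<Rightarrow> nat \<Rightarrow> real" where
  "ca_tau2_finite r x = (SUP n. ca_tau2_le r x n)"

end

theory Submission
  imports Defs
begin

text \<open>The function h(a,b) = r^-(a-b) for a \<ge> b and h(a,b) = 1 for a < b is superharmonic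
  for the chain off the diagonal and equals 1 on it, so it dominates the probability of
  reaching the diagonal from (a,b).  After the first step from (x,x) the chain is at
  (x+1,x) with probability r/(r+1), where h = 1/r, or at (x,x+1) with probability
  1/(r+1), where h = 1; this gives the bound r/(r+1) * 1/r + 1/(r+1) = 2/(r+1).\<close>

definition ca_tie_bound :: "real \<Rightarrow> nat \<Rightarrow> nat \<Rightarrow> real" where
  "ca_tie_bound r a b = (if b \<le> a then (1 / r) ^ (a - b) else 1)"

lemma ca_px_nonneg: "r \<ge> 0 \<Longrightarrow> ca_px r a b \<ge> 0"
  unfolding ca_px_def by simp

lemma ca_py_nonneg: "r \<ge> 0 \<Longrightarrow> ca_py r a b \<ge> 0"
  unfolding ca_py_def by simp

lemma ca_px_plus_py: "r * real a + real b \<noteq> 0 \<Longrightarrow> ca_px r a b + ca_py r a b = 1"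
  unfolding ca_px_def ca_py_def by (simp add: add_divide_distrib[symmetric])

lemma ca_px_py_diagonal:
  assumes "r \<ge> 0" and "x > 0"
  shows "ca_px r x x = r / (r + 1)" and "ca_py r x x = 1 / (r + 1)"
proof -
  have "r * real x + real x = (r + 1) * real x" by (simp add: algebra_simps)
  then show "ca_px r x x = r / (r + 1)" and "ca_py r x x = 1 / (r + 1)"
    unfolding ca_px_def ca_py_def using assms by auto
qed

text \<open>One step to the right costs a factor 1/r more than one step up; this is the
  inequality (r - 1)(a - b) \<ge> 0 after clearing denominators.\<close>

lemma ca_step_contracts_below_diagonal:
  assumes r: "r \<ge> 1" and ba: "b < a"
  shows "ca_px r a b * (1 / r) ^ 2 + ca_py r a b \<le> 1 / r"
proof -
  have pos: "r * real a + real b > 0" using r ba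
    by (simp add: add_pos_nonneg)
  have "(r - 1) * (real a - real b) \<ge> 0" using r ba by simp
  then have "real a + r * real b \<le> r * real a + real b"
    by (simp add: algebra_simps)
  then show ?thesis
    using r pos unfolding ca_px_def ca_py_def
    by (simp add: power2_eq_square divide_simps) (simp add: algebra_simps)
qed

lemma ca_tie_bound_superharmonic:
  assumes r: "r \<ge> 1" and ab: "a \<noteq> b"
  shows "ca_px r a b * ca_tie_bound r (Suc a) b + ca_py r a b * ca_tie_bound r a (Suc b)
           \<le> ca_tie_bound r a b"
proof (cases "a < b")
  case True
  have "ca_px r a b * ca_tie_bound r (Suc a) b \<le> ca_px r a b"
    using True r ca_px_nonneg[of r a b]
    by (intro mult_left_le) (auto simp: ca_tie_bound_def power_le_one)
  moreover have "ca_px r a b + ca_py r a b = 1"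
    using True r by (intro ca_px_plus_py) (simp add: add_nonneg_pos[THEN less_imp_neq, symmetric])
  ultimately show ?thesis
    using True by (simp add: ca_tie_bound_def)
next
  case False
  with ab have ba: "b < a" by simp
  then obtain k where k: "a - b = Suc k" "a - Suc b = k" by (cases "a - b") auto
  have "ca_px r a b * ca_tie_bound r (Suc a) b + ca_py r a b * ca_tie_bound r a (Suc b)
        = (1 / r) ^ k * (ca_px r a b * (1 / r) ^ 2 + ca_py r a b)"
    using ba k by (simp add: ca_tie_bound_def Suc_diff_le algebra_simps power2_eq_square)
  also have "\<dots> \<le> (1 / r) ^ k * (1 / r)"
    using r ca_step_contracts_below_diagonal[OF r ba] by (intro mult_left_mono) auto
  also have "\<dots> = ca_tie_bound r a b"
    using ba k by (simp add: ca_tie_bound_def)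
  finally show ?thesis .
qed

lemma ca_hit_le_tie_bound:
  assumes r: "r \<ge> 1"
  shows "ca_hit r n a b \<le> ca_tie_bound r a b"
proof (induction n arbitrary: a b)
  case 0
  show ?case using r by (simp add: ca_tie_bound_def)
next
  case (Suc n)
  show ?case
  proof (cases "a = b")
    case True
    then show ?thesis by (simp add: ca_tie_bound_def)
  next
    case False
    have "ca_hit r (Suc n) a b
          = ca_px r a b * ca_hit r n (Suc a) b + ca_py r a b * ca_hit r n a (Suc b)"
      using False by simp
    also have "\<dots> \<le> ca_px r a b * ca_tie_bound r (Suc a) b
                    + ca_py r a b * ca_tie_bound r a (Suc b)"
      using Suc.IH r ca_px_nonneg ca_py_nonneg by (intro add_mono mult_left_mono) auto
    also have "\<dots> \<le> ca_tie_bound r a b"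
      using ca_tie_bound_superharmonic[OF r False] .
    finally show ?thesis .
  qed
qed

theorem corollary1:
  fixes r :: real and x :: nat
  assumes "r \<ge> 1" and "x \<ge> 1"
  shows "ca_tau2_finite r x \<le> 2 / (r + 1)"
  unfolding ca_tau2_finite_def
proof (rule cSUP_least)
  fix n
  have right: "ca_hit r n (Suc x) x \<le> 1 / r"
    using ca_hit_le_tie_bound[OF \<open>r \<ge> 1\<close>, of n "Suc x" x] by (simp add: ca_tie_bound_def)
  have up: "ca_hit r n x (Suc x) \<le> 1"
    using ca_hit_le_tie_bound[OF \<open>r \<ge> 1\<close>, of n x "Suc x"] by (simp add: ca_tie_bound_def)
  have "r \<ge> 0" "x > 0" using assms by simp_all
  note diagonal = ca_px_py_diagonal[OF this]
  have "ca_tau2_le r x n \<le> r / (r + 1) * (1 / r) + 1 / (r + 1) * 1"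
    unfolding ca_tau2_le_def diagonal using assms right up
    by (intro add_mono mult_left_mono) auto
  also have "\<dots> = 2 / (r + 1)"
    using assms by (simp add: field_simps)
  finally show "ca_tau2_le r x n \<le> 2 / (r + 1)" .
qed simp

end
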